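(* The multiplicative extension of $B^-$ is a Hopf algebra epimorphism $B^-:\mathcal N_{\mathcal A}\twoheadrightarrow\mathcal H_{CK}$.
   Context: $\mathcal N_{\mathcal A}$ is the natural Hopf algebra of the operad of rooted trees. As an algebra it is the polynomial algebra on generators $t_{\tau(T)}$, one per isomorphism type of rooted tree, with the one-vertex tree equal to $1$. Its coproduct is multiplicative with $\Delta(t_{\tau(T)})=\sum_b t_{\tau(a_b(2))}\otimes t_{\tau(T_b(1))}$. The sum is over all colorings $b$ of the edges of $T$ by $\{1,2\}$ such that the edges of color $1$ form a subtree containing the root (possibly just the root). $T_b(1)$ is the rooted tree obtained by contracting each connected component of the color-$2$ edges (and each vertex not incident to any color-$2$ edge) to a single vertex, i.e. the tree of color-$1$ edges on these blocks. $a_b(2)$ is the forest of rooted trees formed by the color-$2$ components (with singleton trees contributing $1$). $\mathcal H_{CK}$ is the Connes–Kreimer Hopf algebra: the polynomial algebra on generators $t_{\tau(T)}$ for unlabelled rooted trees $T$, with the empty tree equal to $1$. Its coproduct is multiplicative with $\Delta_{CK}(t_{\tau(T)})=\sum_{b_v}t_{\tau(a_{b_v}(2))}\otimes t_{\tau(T_{b_v}(1))}$. The sum is over all colorings $b_v$ of the vertices of $T$ by $\{1,2\}$ such that the vertices of color $1$ induce a rooted subtree containing the root, or the empty set. $T_{b_v}(1)$ is that subtree, and $a_{b_v}(2)$ is the forest induced by the color-$2$ vertices, with $t$ of a forest the product over its trees. $B^-(t_{\tau(T)})=\prod_{j=1}^kt_{\tau(T_j)}$, where $T_1,\dots,T_k$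 are the subtrees of $T$ rooted at the children of the root. In particular, $B^-$ of the one-vertex tree is $1$. *)

theory Defs
  imports "HOL-Library.Multiset" "HOL-Library.Poly_Mapping" "HOL-Library.Product_Plus"
begin

text \<open>Isomorphism types of (unordered, unlabelled) rooted trees: a tree is the multiset
  of the subtrees rooted at the children of its root.\<close>
datatype rtree = Node (children: "rtree multiset")

abbreviation leaf :: rtree where "leaf \<equiv> Node {#}"

text \<open>Concrete plane trees, used as representatives so that colorings of edges / vertices
  are counted with the correct multiplicity.\<close>
datatype ptree = PNode "ptree list"

fun ptp :: "ptree \<Rightarrow> rtree" where
  "ptp (PNode xs) = Node (mset (map ptp xs))"

definition rep :: "rtree \<Rightarrow> ptree" where
  "rep T = (SOME P. ptp P = T)"

datatype col = C1 | C2

text \<open>The polynomial algebra over a field on generators indexed by trees: monomials are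
  multisets of trees, polynomials are finitely supported coefficient functions with
  convolution product.  The tensor square of such an algebra is the polynomial algebra
  whose monomials are pairs of monomials.\<close>
type_synonym 'k palg = "rtree multiset \<Rightarrow>\<^sub>0 'k"
type_synonym 'k palg2 = "(rtree multiset \<times> rtree multiset) \<Rightarrow>\<^sub>0 'k"

definition linext :: "('a \<Rightarrow> 'b) \<Rightarrow> ('a \<Rightarrow>\<^sub>0 'k::comm_ring_1) \<Rightarrow> ('b \<Rightarrow>\<^sub>0 'k)" where
  "linext f p = (\<Sum>m\<in>Poly_Mapping.keys p. Poly_Mapping.single (f m) (Poly_Mapping.lookup p m))"

text \<open>N_A: the one-vertex tree is identified with 1, so the monomials are multisets of
  trees with at least one edge.\<close>
definition NA :: "'k::field palg set" where
  "NA = {p. \<forall>m\<in>Poly_Mapping.keys p. leaf \<notin># m}"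

definition genNA :: "rtree \<Rightarrow> rtree multiset" where
  "genNA T = (if T = leaf then {#} else {#T#})"

text \<open>Edge-colored plane trees: each child is paired with the color of the edge to it.\<close>
datatype ctree = CNode "(col \<times> ctree) list"

fun cplane :: "ctree \<Rightarrow> ptree" where
  "cplane (CNode xs) = PNode (map (\<lambda>p. cplane (snd p)) xs)"

fun all2 :: "ctree \<Rightarrow> bool" where
  "all2 (CNode xs) = (\<forall>p\<in>set xs. fst p = C2 \<and> all2 (snd p))"

text \<open>Edges of color 1 form a subtree containing the root: every color-1 edge hangs
  below color-1 edges only (equivalently no color-1 edge lies below a color-2 edge).\<close>
fun evalid :: "ctree \<Rightarrow> bool" where
  "evalid (CNode xs) =
     (\<forall>p\<in>set xs. (fst p = C1 \<longrightarrow> evalid (snd p)) \<and> (fst p = C2 \<longrightarrow> all2 (snd p)))"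

text \<open>The connected component of color-2 edges containing the root, as a rooted tree.\<close>
fun comp2 :: "ctree \<Rightarrow> rtree" where
  "comp2 (CNode xs) =
     Node (sum_list (map (\<lambda>p. if fst p = C2 then {#comp2 (snd p)#} else {#}) xs))"

text \<open>Children (in the contracted tree) of the block containing the root: the color-1
  edges leaving the root's color-2 component, each with its contracted subtree.\<close>
fun qch :: "ctree \<Rightarrow> rtree multiset" where
  "qch (CNode xs) =
     sum_list (map (\<lambda>p. if fst p = C1 then {#Node (qch (snd p))#} else qch (snd p)) xs)"

text \<open>T_b(1): contract every color-2 component (and isolated vertex) to a vertex.\<close>
definition contr :: "ctree \<Rightarrow> rtree" where
  "contr c = Node (qch c)"

text \<open>Color-2 components other than the root one (those whose top vertex is entered via
  a color-1 edge).\<close>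
fun fch :: "ctree \<Rightarrow> rtree multiset" where
  "fch (CNode xs) =
     sum_list (map (\<lambda>p. if fst p = C1 then {#comp2 (snd p)#} + fch (snd p) else fch (snd p)) xs)"

text \<open>a_b(2): the forest of all color-2 components.\<close>
definition forest2 :: "ctree \<Rightarrow> rtree multiset" where
  "forest2 c = {#comp2 c#} + fch c"

definition forestNA :: "rtree multiset \<Rightarrow> rtree multiset" where
  "forestNA F = filter_mset (\<lambda>T. T \<noteq> leaf) F"

definition DeltaNA_gen :: "rtree \<Rightarrow> 'k::field palg2" where
  "DeltaNA_gen T =
     (\<Sum>c\<in>{c. cplane c = rep T \<and> evalid c}.
        Poly_Mapping.single (forestNA (forest2 c), genNA (contr c)) 1)"

definition DeltaNA :: "'k::field palg \<Rightarrow> 'k palg2" where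
  "DeltaNA p = (\<Sum>m\<in>Poly_Mapping.keys p. Poly_Mapping.single 0 (Poly_Mapping.lookup p m) * prod_mset (image_mset DeltaNA_gen m))"

definition epsilon :: "'k::field palg \<Rightarrow> 'k" where
  "epsilon p = Poly_Mapping.lookup p {#}"

datatype vtree = VNode col "vtree list"

fun vcol :: "vtree \<Rightarrow> col" where
  "vcol (VNode k xs) = k"

fun vplane :: "vtree \<Rightarrow> ptree" where
  "vplane (VNode k xs) = PNode (map vplane xs)"

fun vall2 :: "vtree \<Rightarrow> bool" where
  "vall2 (VNode k xs) = (k = C2 \<and> (\<forall>d\<in>set xs. vall2 d))"

fun upclosed :: "vtree \<Rightarrow> bool" where
  "upclosed (VNode k xs) = (\<forall>d\<in>set xs. (vcol d = C1 \<longrightarrow> k = C1) \<and> upclosed d)"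

text \<open>Color-1 vertices induce a rooted subtree containing the root, or the empty set.\<close>
definition vvalid :: "vtree \<Rightarrow> bool" where
  "vvalid v = (vall2 v \<or> (vcol v = C1 \<and> upclosed v))"

text \<open>The subtree induced by color-1 vertices below (and including) a color-1 vertex.\<close>
fun sub1 :: "vtree \<Rightarrow> rtree" where
  "sub1 (VNode k xs) =
     Node (sum_list (map (\<lambda>d. if vcol d = C1 then {#sub1 d#} else {#}) xs))"

text \<open>The component of color-2 vertices topped at a color-2 vertex.\<close>
fun vcomp2 :: "vtree \<Rightarrow> rtree" where
  "vcomp2 (VNode k xs) =
     Node (sum_list (map (\<lambda>d. if vcol d = C2 then {#vcomp2 d#} else {#}) xs))"

text \<open>Forest induced by color-2 vertices; the flag says whether the parent has color 2.\<close>
fun vforest2 :: "bool \<Rightarrow> vtree \<Rightarrow> rtree multiset" where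
  "vforest2 b (VNode k xs) =
     (if k = C2 \<and> \<not> b then {#vcomp2 (VNode k xs)#} else {#}) +
     sum_list (map (vforest2 (k = C2)) xs)"

text \<open>Monomial of T_{b_v}(1): the empty tree is 1.\<close>
definition vsub1 :: "vtree \<Rightarrow> rtree multiset" where
  "vsub1 v = (if vcol v = C1 then {#sub1 v#} else {#})"

definition DeltaCK_gen :: "rtree \<Rightarrow> 'k::field palg2" where
  "DeltaCK_gen T =
     (\<Sum>v\<in>{v. vplane v = rep T \<and> vvalid v}.
        Poly_Mapping.single (vforest2 False v, vsub1 v) 1)"

definition DeltaCK :: "'k::field palg \<Rightarrow> 'k palg2" where
  "DeltaCK p = (\<Sum>m\<in>Poly_Mapping.keys p. Poly_Mapping.single 0 (Poly_Mapping.lookup p m) * prod_mset (image_mset DeltaCK_gen m))"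

text \<open>B^- on monomials: t_T \<mapsto> product of t over the children subtrees of the root.\<close>
definition Bminus_mon :: "rtree multiset \<Rightarrow> rtree multiset" where
  "Bminus_mon m = sum_mset (image_mset children m)"

definition Bminus :: "'k::field palg \<Rightarrow> 'k palg" where
  "Bminus p = linext Bminus_mon p"

definition Bminus2 :: "'k::field palg2 \<Rightarrow> 'k palg2" where
  "Bminus2 q = linext (\<lambda>(m1, m2). (Bminus_mon m1, Bminus_mon m2)) q"

end

theory Submission
  imports Defs
begin

text \<open>
  \<open>B\<^sup>-\<close> is multiplicative on monomials, so its multiplicative extension is an algebra map;
  it is onto since the monomial \<open>m \<noteq> 1\<close> is the image of \<open>t\<^sub>T\<close> for the tree \<open>T\<close> whose root
  children form \<open>m\<close>.  For the coproduct, colour every non-root vertex of \<open>T\<close> by the colour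
  of the edge entering it and the root by 1.  This is a bijection between admissible edge
  colourings of \<open>T\<close> and admissible vertex colourings of \<open>T\<close> with root coloured 1: the tops
  of the colour-2 edge components become exactly the colour-1 vertices, so \<open>T\<^sub>b(1)\<close> is the
  colour-1 vertex subtree, and removing its top from each colour-2 edge component (which is
  what \<open>B\<^sup>-\<close> does to \<open>a\<^sub>b(2)\<close>) leaves the colour-2 vertex forest.  A vertex colouring
  with root coloured 1 is an arbitrary tuple of admissible vertex colourings of the subtrees
  \<open>T\<^sub>1, \<dots>, T\<^sub>k\<close>, hence \<open>(B\<^sup>- \<otimes> B\<^sup>-) (\<Delta> t\<^sub>T) = \<Delta>\<^sub>C\<^sub>K(t\<^sub>T\<^sub>1) \<cdots> \<Delta>\<^sub>C\<^sub>K(t\<^sub>T\<^sub>k) = \<Delta>\<^sub>C\<^sub>K(B\<^sup>- t\<^sub>T)\<close>.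
\<close>

abbreviation "sng \<equiv> Poly_Mapping.single"
abbreviation "lk \<equiv> Poly_Mapping.lookup"
abbreviation "kys \<equiv> Poly_Mapping.keys"

lemma poly_mapping_sum_single: "(p::'a \<Rightarrow>\<^sub>0 'k::comm_ring_1) = (\<Sum>m\<in>kys p. sng m (lk p m))"
  by (rule poly_mapping_eqI)
     (auto simp: lookup_sum lookup_single when_def in_keys_iff intro: sum.neutral)

lemma times_poly_mapping_sum:
  "(p::'a::monoid_add \<Rightarrow>\<^sub>0 'k::comm_ring_1) * q =
     (\<Sum>a\<in>kys p. \<Sum>b\<in>kys q. sng (a + b) (lk p a * lk q b))"
  by (subst poly_mapping_sum_single[of p], subst poly_mapping_sum_single[of q])
     (simp add: sum_product mult_single)

lemma linext_superset:
  assumes "finite K" "kys p \<subseteq> K"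
  shows "linext f p = (\<Sum>m\<in>K. sng (f m) (lk p m))"
  unfolding linext_def
  by (rule sum.mono_neutral_left) (use assms in \<open>auto simp: in_keys_iff\<close>)

lemma linext_add: "linext f (p + q) = linext f p + linext f q"
proof -
  let ?K = "kys p \<union> kys q"
  have "linext f (p + q) = (\<Sum>m\<in>?K. sng (f m) (lk (p + q) m))"
    by (rule linext_superset) (auto simp: Poly_Mapping.keys_add)
  also have "\<dots> = (\<Sum>m\<in>?K. sng (f m) (lk p m)) + (\<Sum>m\<in>?K. sng (f m) (lk q m))"
    by (simp add: lookup_add single_add sum.distrib)
  also have "\<dots> = linext f p + linext f q"
    using linext_superset[of ?K p f] linext_superset[of ?K q f] by simp
  finally show ?thesis .
qed

lemma linext_single [simp]: "linext f (sng m a) = sng (f m) a"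
  by (cases "a = 0") (simp_all add: linext_def)

lemma linext_zero [simp]: "linext f 0 = 0"
  by (simp add: linext_def)

lemma linext_sum: "linext f (sum g I) = (\<Sum>i\<in>I. linext f (g i))"
  by (induction I rule: infinite_finite_induct) (simp_all add: linext_add)

lemma linext_id: "linext id p = p"
  by (subst (2) poly_mapping_sum_single) (simp add: linext_def)

lemma linext_comp: "linext f (linext g p) = linext (f \<circ> g) p"
  by (subst linext_def[of g]) (simp add: linext_sum linext_def[of "f \<circ> g"])

lemma linext_mult:
  fixes h :: "'a::monoid_add \<Rightarrow> 'b::monoid_add"
  assumes "\<And>a b. h (a + b) = h a + h b"
  shows "linext h ((p::'a \<Rightarrow>\<^sub>0 'k::comm_ring_1) * q) = linext h p * linext h q"
proof -
  have "linext h (p * q) = (\<Sum>a\<in>kys p. \<Sum>b\<in>kys q. sng (h a + h b) (lk p a * lk q b))"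
    by (simp add: times_poly_mapping_sum linext_sum assms)
  also have "\<dots> = linext h p * linext h q"
    by (simp add: linext_def sum_product mult_single)
  finally show ?thesis .
qed

lemma linext_one:
  assumes "h 0 = 0"
  shows "linext h (1::'a::monoid_add \<Rightarrow>\<^sub>0 'k::comm_ring_1) = 1"
  using assms by (simp flip: single_one)

lemma linext_prod_mset:
  fixes h :: "'a::comm_monoid_add \<Rightarrow> 'b::comm_monoid_add"
  assumes "\<And>a b. h (a + b) = h a + h b" "h 0 = 0"
  shows "linext h (prod_mset (image_mset (g :: _ \<Rightarrow> 'a \<Rightarrow>\<^sub>0 'k::comm_ring_1) M)) =
         prod_mset (image_mset (\<lambda>x. linext h (g x)) M)"
  by (induction M) (simp_all add: linext_mult[OF assms(1)] linext_one[of h, OF assms(2)])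

text \<open>\<open>DeltaNA\<close> and \<open>DeltaCK\<close> are both of the form \<open>lincomb F\<close>.\<close>

definition lincomb :: "('a \<Rightarrow> 'b::monoid_add \<Rightarrow>\<^sub>0 'k::comm_ring_1) \<Rightarrow> ('a \<Rightarrow>\<^sub>0 'k) \<Rightarrow> ('b \<Rightarrow>\<^sub>0 'k)" where
  "lincomb F p = (\<Sum>m\<in>kys p. sng 0 (lk p m) * F m)"

lemma lincomb_superset:
  assumes "finite K" "kys p \<subseteq> K"
  shows "lincomb F p = (\<Sum>m\<in>K. sng 0 (lk p m) * F m)"
  unfolding lincomb_def
  by (rule sum.mono_neutral_left) (use assms in \<open>auto simp: in_keys_iff\<close>)

lemma lincomb_add: "lincomb F (p + q) = lincomb F p + lincomb F q"
proof -
  let ?K = "kys p \<union> kys q"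
  have "lincomb F (p + q) = (\<Sum>m\<in>?K. sng 0 (lk (p + q) m) * F m)"
    by (rule lincomb_superset) (auto simp: Poly_Mapping.keys_add)
  also have "\<dots> = (\<Sum>m\<in>?K. sng 0 (lk p m) * F m) + (\<Sum>m\<in>?K. sng 0 (lk q m) * F m)"
    by (simp add: lookup_add single_add sum.distrib distrib_right)
  also have "\<dots> = lincomb F p + lincomb F q"
    using lincomb_superset[of ?K p F] lincomb_superset[of ?K q F] by simp
  finally show ?thesis .
qed

lemma lincomb_single: "lincomb F (sng m a) = sng 0 a * F m"
  by (cases "a = 0") (simp_all add: lincomb_def)

lemma lincomb_zero [simp]: "lincomb F 0 = 0"
  by (simp add: lincomb_def)

lemma lincomb_sum: "lincomb F (sum g I) = (\<Sum>i\<in>I. lincomb F (g i))"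
  by (induction I rule: infinite_finite_induct) (simp_all add: lincomb_add)

lemma lincomb_linext: "lincomb F (linext g p) = (\<Sum>m\<in>kys p. sng 0 (lk p m) * F (g m))"
  unfolding linext_def lincomb_sum lincomb_single ..

lemma Bminus_mon_add [simp]: "Bminus_mon (a + b) = Bminus_mon a + Bminus_mon b"
  by (simp add: Bminus_mon_def)

lemma Bminus_mon_empty [simp]: "Bminus_mon {#} = {#}"
  by (simp add: Bminus_mon_def)

lemma Bminus_mon_add_mset [simp]: "Bminus_mon (add_mset T M) = children T + Bminus_mon M"
  by (simp add: Bminus_mon_def)

lemma Bminus_mon_sum_list: "Bminus_mon (sum_list xs) = sum_list (map Bminus_mon xs)"
  by (induction xs) simp_all

lemma Bminus_mon_forestNA: "Bminus_mon (forestNA F) = Bminus_mon F"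
  unfolding forestNA_def by (induction F) auto

lemma Bminus_mon_genNA: "Bminus_mon (genNA T) = children T"
  by (simp add: genNA_def)

lemma Bminus_mon_eq_empty_iff: "Bminus_mon m = {#} \<longleftrightarrow> (\<forall>T\<in>#m. T = leaf)"
proof (induction m)
  case (add T m)
  then show ?case by (cases T) auto
qed simp

lemma Bminus_mult: "Bminus (p * q) = Bminus p * Bminus q"
  unfolding Bminus_def by (rule linext_mult) simp

lemma Bminus_one: "Bminus 1 = 1"
  unfolding Bminus_def by (rule linext_one) simp

lemma Bminus_add: "Bminus (p + q) = Bminus p + Bminus q"
  unfolding Bminus_def by (rule linext_add)

lemma Bminus_single_0: "Bminus (sng 0 a) = sng 0 a"
  by (simp add: Bminus_def)

lemma Bminus2_eq_linext: "Bminus2 q = linext (map_prod Bminus_mon Bminus_mon) q"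
  by (simp add: Bminus2_def map_prod_def)

lemma map_prod_Bminus_mon_add:
  "map_prod Bminus_mon Bminus_mon (a + b) =
   map_prod Bminus_mon Bminus_mon a + map_prod Bminus_mon Bminus_mon b"
  by (cases a; cases b) simp

lemma Bminus2_mult: "Bminus2 (p * q) = Bminus2 p * Bminus2 q"
  unfolding Bminus2_eq_linext by (rule linext_mult[OF map_prod_Bminus_mon_add])

lemma Bminus2_prod_mset:
  "Bminus2 (prod_mset (image_mset g M)) = prod_mset (image_mset (\<lambda>x. Bminus2 (g x)) M)"
  unfolding Bminus2_eq_linext
  by (rule linext_prod_mset[OF map_prod_Bminus_mon_add]) (simp add: zero_prod_def)

lemma Bminus2_single_0: "Bminus2 (sng 0 a) = sng 0 a"
  by (simp add: Bminus2_eq_linext zero_prod_def)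

section \<open>From edge colourings to vertex colourings\<close>

lemma ctree_induct [case_names CNode]:
  assumes "\<And>ps. (\<And>k c. (k, c) \<in> set ps \<Longrightarrow> P c) \<Longrightarrow> P (CNode ps)"
  shows "P c"
  by (induction c rule: ctree.induct) (rule assms, fastforce intro: snds.intros)

lemma sum_list_map_cong: "(\<And>x. x \<in> set xs \<Longrightarrow> f x = g x) \<Longrightarrow> sum_list (map f xs) = sum_list (map g xs)"
  by (metis map_cong)

text \<open>The argument \<open>k\<close> is the colour given to the root; every other vertex receives the
  colour of the edge entering it.\<close>

fun vtree_of_ctree :: "col \<Rightarrow> ctree \<Rightarrow> vtree" where
  "vtree_of_ctree k (CNode ps) = VNode k (map (\<lambda>p. vtree_of_ctree (fst p) (snd p)) ps)"

fun ctree_of_vtree :: "vtree \<Rightarrow> ctree" where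
  "ctree_of_vtree (VNode k ds) = CNode (map (\<lambda>d. (vcol d, ctree_of_vtree d)) ds)"

lemma vcol_vtree_of_ctree [simp]: "vcol (vtree_of_ctree k c) = k"
  by (cases c) simp

lemma vplane_vtree_of_ctree [simp]: "vplane (vtree_of_ctree k c) = cplane c"
  by (induction c arbitrary: k rule: ctree_induct) auto

lemma cplane_ctree_of_vtree [simp]: "cplane (ctree_of_vtree v) = vplane v"
  by (induction v) auto

lemma vtree_of_ctree_of_vtree [simp]: "vtree_of_ctree (vcol v) (ctree_of_vtree v) = v"
  by (induction v) (auto simp: map_idI)

lemma ctree_of_vtree_of_ctree [simp]: "ctree_of_vtree (vtree_of_ctree k c) = c"
proof (induction c arbitrary: k rule: ctree_induct)
  case (CNode ps)
  then show ?case by (auto intro!: map_idI)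
qed

lemma vall2_vtree_of_ctree: "all2 c \<Longrightarrow> vall2 (vtree_of_ctree C2 c)"
  by (induction c rule: ctree_induct) auto

lemma vall2_imp_upclosed: "vall2 v \<Longrightarrow> upclosed v \<and> vcol v = C2"
  by (induction v) auto

lemma all2_ctree_of_vtree: "vall2 v \<Longrightarrow> all2 (ctree_of_vtree v)"
  by (induction v) (auto dest: vall2_imp_upclosed)

lemma upclosed_C2_imp_vall2: "upclosed v \<Longrightarrow> vcol v = C2 \<Longrightarrow> vall2 v"
proof (induction v)
  case (VNode k ds)
  have "vcol d = C2" if "d \<in> set ds" for d
    using VNode.prems that by (cases "vcol d") auto
  with VNode show ?case by auto
qed

lemma vvalid_iff_upclosed: "vvalid v \<longleftrightarrow> upclosed v"
  unfolding vvalid_def by (metis col.exhaust upclosed_C2_imp_vall2 vall2_imp_upclosed)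

lemma upclosed_vtree_of_ctree: "evalid c \<Longrightarrow> upclosed (vtree_of_ctree C1 c)"
proof (induction c rule: ctree_induct)
  case (CNode ps)
  have "upclosed (vtree_of_ctree k c)" if "(k, c) \<in> set ps" for k c
    using CNode that
    by (cases k) (fastforce dest: vall2_vtree_of_ctree vall2_imp_upclosed)+
  then show ?case by auto
qed

lemma evalid_ctree_of_vtree: "upclosed v \<Longrightarrow> vcol v = C1 \<Longrightarrow> evalid (ctree_of_vtree v)"
  by (induction v) (auto intro: all2_ctree_of_vtree upclosed_C2_imp_vall2)

lemma vcomp2_vtree_of_ctree: "vcomp2 (vtree_of_ctree k c) = comp2 c"
proof (induction c arbitrary: k rule: ctree_induct)
  case (CNode ps)
  then show ?case by (auto simp: comp_def intro!: sum_list_map_cong)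
qed

lemma fch_all2: "all2 c \<Longrightarrow> fch c = {#}"
  by (induction c rule: ctree_induct)
     (auto intro!: sum_list_map_cong[where g="\<lambda>_. {#}", simplified])

lemma qch_all2: "all2 c \<Longrightarrow> qch c = {#}"
  by (induction c rule: ctree_induct)
     (auto intro!: sum_list_map_cong[where g="\<lambda>_. {#}", simplified])

lemma vforest2_True_all2: "all2 c \<Longrightarrow> vforest2 True (vtree_of_ctree C2 c) = {#}"
  by (induction c rule: ctree_induct)
     (auto intro!: sum_list_map_cong[where g="\<lambda>_. {#}", simplified])

lemma vforest2_False_all2:
  assumes "all2 c"
  shows "vforest2 False (vtree_of_ctree C2 c) = {#comp2 c#}"
proof -
  obtain ps where c: "c = CNode ps" by (cases c)
  have "vforest2 False (vtree_of_ctree C2 c) =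
        {#vcomp2 (vtree_of_ctree C2 c)#} + vforest2 True (vtree_of_ctree C2 c)"
    by (simp add: c)
  then show ?thesis
    by (simp add: vforest2_True_all2[OF assms] vcomp2_vtree_of_ctree)
qed

lemma Bminus_mon_forest2:
  assumes "evalid c"
  shows "Bminus_mon (forest2 c) = vforest2 False (vtree_of_ctree C1 c)"
  using assms
proof (induction c rule: ctree_induct)
  case (CNode ps)
  have "Bminus_mon (forest2 (CNode ps)) =
    sum_list (map (\<lambda>p. (if fst p = C2 then {#comp2 (snd p)#} else {#}) +
      Bminus_mon (if fst p = C1 then {#comp2 (snd p)#} + fch (snd p) else fch (snd p))) ps)"
    by (simp add: forest2_def Bminus_mon_sum_list sum_list_addf comp_def)
  also have "\<dots> = sum_list (map (\<lambda>p. vforest2 False (vtree_of_ctree (fst p) (snd p))) ps)"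
  proof (rule sum_list_map_cong)
    fix p assume p: "p \<in> set ps"
    obtain k c where p_eq: "p = (k, c)" by force
    show "(if fst p = C2 then {#comp2 (snd p)#} else {#}) +
      Bminus_mon (if fst p = C1 then {#comp2 (snd p)#} + fch (snd p) else fch (snd p)) =
      vforest2 False (vtree_of_ctree (fst p) (snd p))"
    proof (cases k)
      case C1
      with CNode p p_eq show ?thesis by (auto simp: forest2_def)
    next
      case C2
      with CNode.prems p p_eq have "all2 c" by auto
      with C2 p_eq show ?thesis by (simp add: fch_all2 vforest2_False_all2)
    qed
  qed
  also have "\<dots> = vforest2 False (vtree_of_ctree C1 (CNode ps))"
    by (simp add: comp_def)
  finally show ?case .
qed

lemma sub1_vtree_of_ctree: "evalid c \<Longrightarrow> sub1 (vtree_of_ctree C1 c) = contr c"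
proof (induction c rule: ctree_induct)
  case (CNode ps)
  have "(if fst p = C1 then {#sub1 (vtree_of_ctree C1 (snd p))#} else {#}) =
        (if fst p = C1 then {#Node (qch (snd p))#} else qch (snd p))" if p: "p \<in> set ps" for p
  proof (cases "fst p")
    case C1
    with CNode p show ?thesis by (cases p) (auto simp: contr_def)
  next
    case C2
    with CNode.prems p have "all2 (snd p)" by (cases p) auto
    with C2 show ?thesis by (simp add: qch_all2)
  qed
  then have "sum_list (map (\<lambda>p. if fst p = C1 then {#sub1 (vtree_of_ctree C1 (snd p))#} else {#}) ps) =
             qch (CNode ps)"
    by (simp cong: sum_list_map_cong)
  moreover have "sub1 (vtree_of_ctree C1 (CNode ps)) =
    Node (sum_list (map (\<lambda>p. if fst p = C1 then {#sub1 (vtree_of_ctree C1 (snd p))#} else {#}) ps))"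
    by (simp add: comp_def) (rule sum_list_map_cong, auto)
  ultimately show ?case by (simp add: contr_def)
qed

definition upclosed_colorings :: "ptree \<Rightarrow> vtree set" where
  "upclosed_colorings P = {v. vplane v = P \<and> upclosed v}"

definition upclosed_colorings1 :: "ptree \<Rightarrow> vtree set" where
  "upclosed_colorings1 P = {v. vplane v = P \<and> upclosed v \<and> vcol v = C1}"

definition list_choices :: "('b \<Rightarrow> 'a set) \<Rightarrow> 'b list \<Rightarrow> 'a list set" where
  "list_choices S xs = {ds. list_all2 (\<lambda>d x. d \<in> S x) ds xs}"

lemma list_choices_Nil [simp]: "list_choices S [] = {[]}"
  by (auto simp: list_choices_def)

lemma list_choices_Cons: "list_choices S (x # xs) = (\<lambda>(d, ds). d # ds) ` (S x \<times> list_choices S xs)"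
  by (auto simp: list_choices_def list_all2_Cons2)

lemma finite_list_choices: "(\<And>x. x \<in> set xs \<Longrightarrow> finite (S x)) \<Longrightarrow> finite (list_choices S xs)"
  by (induction xs) (auto simp: list_choices_Cons)

lemma sum_list_choices_prod_list:
  assumes "\<And>x. x \<in> set xs \<Longrightarrow> finite (S x)"
  shows "(\<Sum>ds\<in>list_choices S xs. prod_list (map f ds)) =
         prod_list (map (\<lambda>x. \<Sum>d\<in>S x. (f d :: 'c::comm_semiring_1)) xs)"
  using assms
proof (induction xs)
  case (Cons x xs)
  have inj: "inj_on (\<lambda>(d, ds). d # ds) (S x \<times> list_choices S xs)"
    by (auto simp: inj_on_def)
  have "(\<Sum>ds\<in>list_choices S (x # xs). prod_list (map f ds)) =
        (\<Sum>(d, ds)\<in>S x \<times> list_choices S xs. f d * prod_list (map f ds))"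
    unfolding list_choices_Cons by (subst sum.reindex[OF inj]) (simp add: case_prod_unfold)
  also have "\<dots> = (\<Sum>d\<in>S x. f d) * (\<Sum>ds\<in>list_choices S xs. prod_list (map f ds))"
    by (simp add: sum_product sum.cartesian_product)
  finally show ?case using Cons by simp
qed simp

lemma in_list_choices_upclosed_colorings:
  "ds \<in> list_choices upclosed_colorings xs \<longleftrightarrow> map vplane ds = xs \<and> (\<forall>d\<in>set ds. upclosed d)"
  by (induction ds arbitrary: xs)
     (auto simp: list_choices_def upclosed_colorings_def list_all2_Cons1)

lemma upclosed_colorings_PNode_subset:
  "upclosed_colorings (PNode xs) \<subseteq>
     (\<lambda>(k, ds). VNode k ds) ` (UNIV \<times> list_choices upclosed_colorings xs)"
  by (auto simp: upclosed_colorings_def in_list_choices_upclosed_colorings image_iff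
      elim!: vplane.elims)

lemma finite_upclosed_colorings: "finite (upclosed_colorings P)"
proof (induction P)
  case (PNode xs)
  have "finite (UNIV :: col set)"
    by (metis (full_types) col.exhaust finite.intros finite_subset insertCI subsetI)
  with PNode have "finite ((UNIV :: col set) \<times> list_choices upclosed_colorings xs)"
    by (simp add: finite_list_choices)
  then show ?case
    by (rule finite_subset[OF upclosed_colorings_PNode_subset finite_imageI])
qed

lemma upclosed_colorings1_PNode:
  "upclosed_colorings1 (PNode xs) = VNode C1 ` list_choices upclosed_colorings xs"
  by (auto simp: upclosed_colorings1_def in_list_choices_upclosed_colorings image_iff
      elim!: vplane.elims)

fun all_C2 :: "ptree \<Rightarrow> vtree" where
  "all_C2 (PNode xs) = VNode C2 (map all_C2 xs)"

lemma vcol_all_C2 [simp]: "vcol (all_C2 P) = C2"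
  by (cases P) simp

lemma vplane_all_C2: "vplane (all_C2 P) = P"
  by (induction P) (auto simp: map_idI)

lemma vall2_all_C2: "vall2 (all_C2 P)"
  by (induction P) auto

lemma vall2_eq_all_C2: "vall2 v \<Longrightarrow> v = all_C2 (vplane v)"
  by (induction v) (auto simp: map_idI)

lemma vforest2_all_C2: "vforest2 False (all_C2 P) = {#ptp P#}"
proof -
  have "vcomp2 (all_C2 P) = ptp P \<and> vforest2 True (all_C2 P) = {#}"
  proof (induction P)
    case (PNode xs)
    then have "sum_list (map (vforest2 True \<circ> all_C2) xs) = {#}"
      by (induction xs) auto
    with PNode show ?case
      by (simp add: comp_def) (auto intro!: image_mset_cong)
  qed
  then show ?thesis by (cases P) simp
qed

lemma upclosed_colorings_eq:
  "upclosed_colorings P = insert (all_C2 P) (upclosed_colorings1 P)"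
proof (intro equalityI subsetI)
  fix v assume v: "v \<in> upclosed_colorings P"
  show "v \<in> insert (all_C2 P) (upclosed_colorings1 P)"
  proof (cases "vcol v")
    case C1
    with v show ?thesis by (auto simp: upclosed_colorings_def upclosed_colorings1_def)
  next
    case C2
    with v have "vall2 v" by (auto simp: upclosed_colorings_def upclosed_C2_imp_vall2)
    with v show ?thesis by (auto simp: upclosed_colorings_def dest: vall2_eq_all_C2)
  qed
next
  fix v assume "v \<in> insert (all_C2 P) (upclosed_colorings1 P)"
  then show "v \<in> upclosed_colorings P"
    using vplane_all_C2[of P] vall2_all_C2[of P] vall2_imp_upclosed
    by (auto simp: upclosed_colorings_def upclosed_colorings1_def)
qed

section \<open>The Connes--Kreimer coproduct of a plane tree\<close>

definition DeltaCK_plane :: "ptree \<Rightarrow> 'k::field palg2" where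
  "DeltaCK_plane P = (\<Sum>v\<in>upclosed_colorings P. sng (vforest2 False v, vsub1 v) 1)"

text \<open>\<open>(B\<^sup>- \<otimes> B\<^sup>-) (\<Delta> t\<^sub>T)\<close> in terms of vertex colourings with root coloured 1.\<close>

definition Bminus_cuts :: "ptree \<Rightarrow> 'k::field palg2" where
  "Bminus_cuts P = (\<Sum>v\<in>upclosed_colorings1 P. sng (vforest2 False v, children (sub1 v)) 1)"

lemma prod_list_single_pairs:
  "prod_list (map (\<lambda>d. sng (f d, g d) (1::'k::comm_ring_1)) ds) =
   sng (sum_list (map f ds), sum_list (map g ds)) 1"
  by (induction ds) (simp_all add: mult_single zero_prod_def flip: single_one)

lemma Bminus_cuts_PNode: "Bminus_cuts (PNode xs) = prod_list (map DeltaCK_plane xs)"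
proof -
  have "Bminus_cuts (PNode xs) =
        (\<Sum>ds\<in>list_choices upclosed_colorings xs.
           sng (vforest2 False (VNode C1 ds), children (sub1 (VNode C1 ds))) 1)"
    unfolding Bminus_cuts_def upclosed_colorings1_PNode
    by (subst sum.reindex) (auto simp: inj_on_def)
  also have "\<dots> = (\<Sum>ds\<in>list_choices upclosed_colorings xs.
                      prod_list (map (\<lambda>d. sng (vforest2 False d, vsub1 d) 1) ds))"
    by (simp add: prod_list_single_pairs vsub1_def comp_def)
  also have "\<dots> = prod_list (map DeltaCK_plane xs)"
    by (subst sum_list_choices_prod_list) (simp_all add: finite_upclosed_colorings DeltaCK_plane_def[abs_def])
  finally show ?thesis .
qed

definition Bplus_right :: "'k::field palg2 \<Rightarrow> 'k palg2" where
  "Bplus_right = linext (\<lambda>(f, s). (f, {#Node s#}))"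

lemma DeltaCK_plane_eq: "DeltaCK_plane P = sng ({#ptp P#}, {#}) 1 + Bplus_right (Bminus_cuts P)"
proof -
  have "all_C2 P \<notin> upclosed_colorings1 P"
    by (simp add: upclosed_colorings1_def)
  moreover have "finite (upclosed_colorings1 P)"
    using finite_upclosed_colorings[of P] upclosed_colorings_eq[of P] by simp
  ultimately have "DeltaCK_plane P = sng (vforest2 False (all_C2 P), vsub1 (all_C2 P)) 1 +
      (\<Sum>v\<in>upclosed_colorings1 P. sng (vforest2 False v, vsub1 v) 1)"
    unfolding DeltaCK_plane_def upclosed_colorings_eq by simp
  also have "(\<Sum>v\<in>upclosed_colorings1 P. sng (vforest2 False v, vsub1 v) 1) =
             Bplus_right (Bminus_cuts P)"
    unfolding Bplus_right_def Bminus_cuts_def linext_sum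
    by (rule sum.cong) (auto simp: upclosed_colorings1_def vsub1_def)
  finally show ?thesis by (simp add: vforest2_all_C2 vsub1_def)
qed

text \<open>The recursion \<open>\<Delta>(t\<^sub>T) = t\<^sub>T \<otimes> 1 + (id \<otimes> B\<^sup>+) (\<Delta>(t\<^sub>T\<^sub>1) \<cdots> \<Delta>(t\<^sub>T\<^sub>k))\<close> on isomorphism
  types; it shows that \<open>DeltaCK_plane\<close> does not depend on the plane representative.\<close>

primrec DeltaCK_rec :: "rtree \<Rightarrow> 'k::field palg2" where
  "DeltaCK_rec (Node M) = sng ({#Node M#}, {#}) 1 + Bplus_right (prod_mset (image_mset DeltaCK_rec M))"

lemma prod_list_DeltaCK_rec_ptp:
  "prod_list (map (DeltaCK_rec \<circ> ptp) xs) =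
   (prod_mset (image_mset DeltaCK_rec (mset (map ptp xs))) :: 'k::field palg2)"
  by (simp add: prod_mset_prod_list flip: mset_map)

lemma DeltaCK_plane_eq_rec: "(DeltaCK_plane P :: 'k::field palg2) = DeltaCK_rec (ptp P)"
proof (induction P)
  case (PNode xs)
  then have "map (DeltaCK_plane :: _ \<Rightarrow> 'k palg2) xs = map (DeltaCK_rec \<circ> ptp) xs"
    by auto
  then show ?case
    by (simp only: DeltaCK_plane_eq Bminus_cuts_PNode prod_list_DeltaCK_rec_ptp) simp
qed

lemma ptp_surj: "\<exists>P. ptp P = T"
proof (induction T)
  case (Node M)
  obtain xs where xs: "mset xs = M" using ex_mset by blast
  with Node have "\<forall>T\<in>set xs. \<exists>P. ptp P = T" by auto
  then obtain f where "\<forall>T\<in>set xs. ptp (f T) = T" by metis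
  then have "ptp (PNode (map f xs)) = Node M"
    using xs by (simp add: map_idI)
  then show ?case ..
qed

lemma ptp_rep: "ptp (rep T) = T"
  unfolding rep_def by (rule someI_ex[OF ptp_surj])

lemma DeltaCK_gen_eq_rec: "DeltaCK_gen T = DeltaCK_rec T"
proof -
  have "DeltaCK_gen T = DeltaCK_plane (rep T)"
    by (simp add: DeltaCK_gen_def DeltaCK_plane_def upclosed_colorings_def vvalid_iff_upclosed)
  then show ?thesis by (simp add: DeltaCK_plane_eq_rec ptp_rep)
qed

section \<open>\<open>B\<^sup>-\<close> is a bialgebra epimorphism\<close>

lemma Bminus2_DeltaNA_gen_eq_cuts: "Bminus2 (DeltaNA_gen T :: 'k::field palg2) = Bminus_cuts (rep T)"
proof -
  let ?C = "{c. cplane c = rep T \<and> evalid c}"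
  have "Bminus2 (DeltaNA_gen T :: 'k palg2) =
     (\<Sum>c\<in>?C. sng (Bminus_mon (forestNA (forest2 c)), Bminus_mon (genNA (contr c))) 1)"
    unfolding DeltaNA_gen_def Bminus2_def linext_sum by simp
  also have "\<dots> = (\<Sum>c\<in>?C. sng (vforest2 False (vtree_of_ctree C1 c),
                                 children (sub1 (vtree_of_ctree C1 c))) 1)"
    by (rule sum.cong)
       (auto simp: Bminus_mon_forestNA Bminus_mon_genNA Bminus_mon_forest2 sub1_vtree_of_ctree)
  also have "\<dots> = Bminus_cuts (rep T)"
    unfolding Bminus_cuts_def
    by (rule sum.reindex_bij_witness[where i=ctree_of_vtree and j="vtree_of_ctree C1"])
       (auto simp: upclosed_colorings1_def upclosed_vtree_of_ctree evalid_ctree_of_vtree,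
        metis vtree_of_ctree_of_vtree)
  finally show ?thesis .
qed

lemma Bminus2_DeltaNA_gen:
  "Bminus2 (DeltaNA_gen T :: 'k::field palg2) = prod_mset (image_mset DeltaCK_gen (children T))"
proof -
  obtain xs where xs: "rep T = PNode xs" by (cases "rep T")
  have children_T: "children T = mset (map ptp xs)"
    using ptp_rep[of T] xs by (metis ptp.simps rtree.sel)
  have "map (DeltaCK_plane :: _ \<Rightarrow> 'k palg2) xs = map (DeltaCK_rec \<circ> ptp) xs"
    using DeltaCK_plane_eq_rec by auto
  then show ?thesis
    by (simp only: Bminus2_DeltaNA_gen_eq_cuts xs Bminus_cuts_PNode children_T
        prod_list_DeltaCK_rec_ptp DeltaCK_gen_eq_rec[abs_def])
qed

lemma prod_mset_image_sum_mset:
  "prod_mset (image_mset f (sum_mset (image_mset g M))) =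
   prod_mset (image_mset (\<lambda>T. prod_mset (image_mset f (g T))) M)"
  by (induction M) simp_all

lemma DeltaCK_Bminus: "DeltaCK (Bminus p) = Bminus2 (DeltaNA (p :: 'k::field palg))"
proof -
  have "DeltaCK (Bminus p) =
        (\<Sum>m\<in>kys p. sng 0 (lk p m) * prod_mset (image_mset DeltaCK_gen (Bminus_mon m)))"
    unfolding Bminus_def DeltaCK_def lincomb_def[symmetric] lincomb_linext ..
  also have "\<dots> = (\<Sum>m\<in>kys p. Bminus2 (sng 0 (lk p m) * prod_mset (image_mset DeltaNA_gen m)))"
    by (rule sum.cong)
       (simp_all add: Bminus2_mult Bminus2_single_0 Bminus2_prod_mset Bminus2_DeltaNA_gen
         Bminus_mon_def prod_mset_image_sum_mset)
  also have "\<dots> = Bminus2 (DeltaNA p)"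
    unfolding DeltaNA_def Bminus2_def linext_sum ..
  finally show ?thesis .
qed

text \<open>Here \<open>p \<in> NA\<close> is needed: \<open>B\<^sup>-\<close> sends the one-vertex tree to 1.\<close>

lemma epsilon_Bminus:
  assumes "p \<in> NA"
  shows "epsilon (Bminus p) = epsilon (p :: 'k::field palg)"
proof -
  have "epsilon (Bminus p) = (\<Sum>m\<in>kys p. lk (sng (Bminus_mon m) (lk p m)) {#})"
    unfolding epsilon_def Bminus_def linext_def lookup_sum ..
  also have "\<dots> = (\<Sum>m\<in>kys p. if m = {#} then lk p m else 0)"
  proof (rule sum.cong)
    fix m assume "m \<in> kys p"
    with assms have "leaf \<notin># m" by (auto simp: NA_def)
    then have "Bminus_mon m = {#} \<longleftrightarrow> m = {#}"
      by (auto simp: Bminus_mon_eq_empty_iff) (metis multiset_nonemptyE)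
    then show "lk (sng (Bminus_mon m) (lk p m)) {#} = (if m = {#} then lk p m else 0)"
      by (auto simp: lookup_single when_def)
  qed simp
  also have "\<dots> = lk p {#}"
    by (auto simp: sum.delta in_keys_iff)
  finally show ?thesis unfolding epsilon_def .
qed

definition Bplus_mon :: "rtree multiset \<Rightarrow> rtree multiset" where
  "Bplus_mon m = (if m = {#} then {#} else {#Node m#})"

lemma Bminus_surj: "\<exists>p\<in>NA. Bminus p = (q :: 'k::field palg)"
proof
  have "Bminus_mon \<circ> Bplus_mon = id"
    by (auto simp: Bplus_mon_def fun_eq_iff)
  then show "Bminus (linext Bplus_mon q) = q"
    unfolding Bminus_def linext_comp by (simp add: linext_id)
  have "kys (linext Bplus_mon q) \<subseteq> Bplus_mon ` kys q"
    unfolding linext_def by (rule order_trans[OF Poly_Mapping.keys_sum]) auto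
  moreover have "leaf \<notin># Bplus_mon m" for m
    by (auto simp: Bplus_mon_def)
  ultimately show "linext Bplus_mon q \<in> NA"
    by (auto simp: NA_def)
qed

theorem mainTheorem12:
  shows
    \<comment> \<open>algebra morphism N_A -> H_CK\<close>
    "(\<forall>p\<in>(NA :: 'k::field palg set). \<forall>q\<in>NA. Bminus (p * q) = Bminus p * Bminus q) \<and>
     Bminus (1 :: 'k palg) = 1 \<and>
     (\<forall>p\<in>(NA :: 'k palg set). \<forall>q\<in>NA. Bminus (p + q) = Bminus p + Bminus q) \<and>
     (\<forall>p\<in>(NA :: 'k palg set). \<forall>a::'k. Bminus (Poly_Mapping.single 0 a * p) = Poly_Mapping.single 0 a * Bminus p) \<and>
     \<comment> \<open>coalgebra morphism\<close>
     (\<forall>p\<in>(NA :: 'k palg set). DeltaCK (Bminus p) = Bminus2 (DeltaNA p)) \<and>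
     (\<forall>p\<in>(NA :: 'k palg set). epsilon (Bminus p) = epsilon p) \<and>
     \<comment> \<open>surjective\<close>
     (\<forall>q :: 'k palg. \<exists>p\<in>NA. Bminus p = q)"
  by (simp add: Bminus_mult Bminus_one Bminus_add Bminus_single_0 DeltaCK_Bminus
      epsilon_Bminus Bminus_surj)

end
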